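(* Let $\mathbb Q\subset K$ be a finite field extension and let $(V,M_V)$ be a DVR with quotient field $\mathbb Q(X)$ containing $\mathbb Z[X]$ such that $A:=V\cap\mathbb Q[X]$ is a PvMD. Let $(W,M_W)$ be a valuation domain with quotient field $K(X)$ extending $V$ (i.e. $W\cap\mathbb Q(X)=V$). Then $B:=W\cap K[X]$ is a PvMD.
   Context: For an integral domain $R$ with quotient field $F$ and nonzero fractional ideal $I$: $(R:I)=\{x\in F:xI\subseteq R\}$, $I^v=(R:(R:I))$, $I^t=\bigcup\{J^v:J\subseteq I \text{ finitely generated}\}$; $I$ is a $t$-ideal if $I=(0)$ or $I=I^t$; $t$-maximal ideals are $t$-ideals maximal among proper $t$-ideals. $R$ is a PvMD if $R_{\mathfrak m}$ is a valuation domain for all $t$-maximal $\mathfrak m$. *)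

theory Defs
  imports "HOL-Computational_Algebra.Polynomial" "HOL-Computational_Algebra.Fraction_Field"
begin

definition subring :: "'f::field set \<Rightarrow> bool" where
  "subring R \<longleftrightarrow> 0 \<in> R \<and> 1 \<in> R \<and> (\<forall>x\<in>R. \<forall>y\<in>R. x + y \<in> R \<and> x * y \<in> R \<and> - x \<in> R)"

definition qf :: "'f::field set \<Rightarrow> 'f set" where
  "qf R = {a / b | a b. a \<in> R \<and> b \<in> R \<and> b \<noteq> 0}"

definition colon :: "'f::field set \<Rightarrow> 'f set \<Rightarrow> 'f set" where
  "colon R I = {x \<in> qf R. \<forall>i\<in>I. x * i \<in> R}"

definition v_op :: "'f::field set \<Rightarrow> 'f set \<Rightarrow> 'f set" where
  "v_op R I = colon R (colon R I)"

definition rspan :: "'f::field set \<Rightarrow> 'f set \<Rightarrow> 'f set" where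
  "rspan R S = {(\<Sum>s\<in>S. c s * s) | c. \<forall>s\<in>S. c s \<in> R}"

definition fin_gen :: "'f::field set \<Rightarrow> 'f set \<Rightarrow> bool" where
  "fin_gen R J \<longleftrightarrow> (\<exists>S. finite S \<and> S \<subseteq> qf R \<and> J = rspan R S)"

definition t_op :: "'f::field set \<Rightarrow> 'f set \<Rightarrow> 'f set" where
  "t_op R I = \<Union>{v_op R J | J. fin_gen R J \<and> J \<subseteq> I}"

definition is_ideal :: "'f::field set \<Rightarrow> 'f set \<Rightarrow> bool" where
  "is_ideal R I \<longleftrightarrow> I \<subseteq> R \<and> 0 \<in> I \<and> (\<forall>x\<in>I. \<forall>y\<in>I. x + y \<in> I) \<and> (\<forall>r\<in>R. \<forall>x\<in>I. r * x \<in> I)"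

definition t_ideal :: "'f::field set \<Rightarrow> 'f set \<Rightarrow> bool" where
  "t_ideal R I \<longleftrightarrow> is_ideal R I \<and> (I = {0} \<or> I = t_op R I)"

definition t_maximal :: "'f::field set \<Rightarrow> 'f set \<Rightarrow> bool" where
  "t_maximal R m \<longleftrightarrow> t_ideal R m \<and> m \<noteq> R \<and>
     (\<forall>J. t_ideal R J \<and> J \<noteq> R \<and> m \<subseteq> J \<longrightarrow> J = m)"

definition localize :: "'f::field set \<Rightarrow> 'f set \<Rightarrow> 'f set" where
  "localize R m = {a / s | a s. a \<in> R \<and> s \<in> R - m}"

definition valuation_domain_in :: "'f::field set \<Rightarrow> 'f set \<Rightarrow> bool" where
  "valuation_domain_in F S \<longleftrightarrow> subring S \<and> S \<subseteq> F \<and>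
     (\<forall>x\<in>F. x \<noteq> 0 \<longrightarrow> x \<in> S \<or> inverse x \<in> S)"

definition PvMD :: "'f::field set \<Rightarrow> bool" where
  "PvMD R \<longleftrightarrow> subring R \<and>
     (\<forall>m. t_maximal R m \<longrightarrow> valuation_domain_in (qf R) (localize R m))"

definition valuation_domain :: "'f::field set \<Rightarrow> bool" where
  "valuation_domain W \<longleftrightarrow> valuation_domain_in UNIV W"

definition DVR :: "'f::field set \<Rightarrow> bool" where
  "DVR V \<longleftrightarrow> (\<exists>v :: 'f \<Rightarrow> int.
      (\<forall>n. \<exists>x. x \<noteq> 0 \<and> v x = n) \<and>
      (\<forall>x y. x \<noteq> 0 \<longrightarrow> y \<noteq> 0 \<longrightarrow> v (x * y) = v x + v y) \<and>
      (\<forall>x y. x \<noteq> 0 \<longrightarrow> y \<noteq> 0 \<longrightarrow> x + y \<noteq> 0 \<longrightarrow> v (x + y) \<ge> min (v x) (v y)) \<and>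
      V = {x. x = 0 \<or> v x \<ge> 0})"

definition finite_ext_Q :: "'k::field_char_0 itself \<Rightarrow> bool" where
  "finite_ext_Q _ \<longleftrightarrow> (\<exists>S :: 'k set. finite S \<and>
      (\<forall>x. \<exists>c. x = (\<Sum>s\<in>S. of_rat (c s) * s)))"

text \<open>Polynomial part: R \<inter> k[X] inside k(X).\<close>
definition poly_part :: "'a::idom poly fract set \<Rightarrow> 'a poly fract set" where
  "poly_part R = {Fract p 1 | p. Fract p 1 \<in> R}"

end

theory Submission
  imports Defs "HOL-Computational_Algebra.Polynomial_Factorial"
begin

text \<open>
  Let \<open>m\<close> be a t-maximal ideal of \<open>B = W \<inter> K[X]\<close>; it is prime, and we show that \<open>B\<^sub>m\<close> is a
  valuation domain.

  If \<open>B\<^sub>m\<close> contains \<open>K[X]\<close>, write an element as \<open>p/q\<close> in lowest terms; then \<open>u p + w q = 1\<close>,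
  so one of \<open>p, q\<close> is a unit of the local ring \<open>B\<^sub>m\<close>.

  Otherwise some nonzero constant \<open>c \<in> K\<close> lies in \<open>m\<close>. Then no \<open>s \<in> m - {0}\<close> has \<open>s\<^sup>-\<^sup>1 \<in> W\<close>:
  every \<open>x\<close> with \<open>x c, x s \<in> B\<close> lies in \<open>K[X] \<inter> W\<close>, so \<open>(c, s)\<^sub>v = B\<close>, which is impossible
  inside the t-ideal \<open>m\<close>. In particular \<open>c\<close> is a nonunit of \<open>W\<close>; as \<open>c\<^sup>-\<^sup>1\<close> is a
  \<open>\<rat>\<close>-polynomial in \<open>c\<close>, some rational \<open>r\<close> is a nonunit of \<open>W\<close>, hence of the DVR \<open>V\<close>.
  Every nonzero \<open>g \<in> K[X]\<close> divides a nonzero \<open>q \<in> \<rat>[X]\<close> (linear algebra over \<open>\<rat>(X)\<close>), and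
  \<open>q\<^sup>n r\<^sup>k\<close> is a unit of \<open>V\<close> for suitable \<open>n > 0\<close>, \<open>k\<close>. This yields \<open>u \<in> K[X]\<close> with \<open>g u\<close> a unit
  of \<open>W\<close>, so \<open>g u \<in> B - m\<close>, and \<open>f/g = f u/(g u) \<in> B\<^sub>m\<close> for every \<open>f/g \<in> W\<close>. Thus
  \<open>W \<subseteq> B\<^sub>m\<close>, and an overring of a valuation domain is one.
\<close>

section \<open>Subrings, ideals and the t-operation\<close>

lemma subring_0: "subring R \<Longrightarrow> 0 \<in> R"
  and subring_add: "subring R \<Longrightarrow> x \<in> R \<Longrightarrow> y \<in> R \<Longrightarrow> x + y \<in> R"
  and subring_mult: "subring R \<Longrightarrow> x \<in> R \<Longrightarrow> y \<in> R \<Longrightarrow> x * y \<in> R"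
  by (simp_all add: subring_def)

lemma subring_sum: "subring R \<Longrightarrow> (\<And>i. i \<in> I \<Longrightarrow> f i \<in> R) \<Longrightarrow> sum f I \<in> R"
  by (induct I rule: infinite_finite_induct) (auto simp: subring_def)

lemma subring_power: "subring R \<Longrightarrow> x \<in> R \<Longrightarrow> x ^ n \<in> R"
  by (induct n) (auto simp: subring_def)

lemma subring_Int: "subring R \<Longrightarrow> subring S \<Longrightarrow> subring (R \<inter> S)"
  unfolding subring_def by blast

lemma valuation_domainD:
  assumes "valuation_domain W"
  shows "subring W" and "x \<noteq> 0 \<Longrightarrow> x \<in> W \<or> inverse x \<in> W"
  using assms by (auto simp: valuation_domain_def valuation_domain_in_def)

lemma valuation_domain_overring:
  assumes "valuation_domain W" "subring L" "W \<subseteq> L"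
  shows "valuation_domain L"
  using assms by (auto simp: valuation_domain_def valuation_domain_in_def)

lemma valuation_domain_divides_all:
  assumes W: "valuation_domain W" and A: "finite A" "A \<noteq> {}" "0 \<notin> A"
  shows "\<exists>c\<in>A. \<forall>a\<in>A. a / c \<in> W"
  using A
proof (induct A rule: finite_ne_induct)
  case (singleton x)
  then show ?case using valuation_domainD(1)[OF W] by (simp add: subring_def)
next
  case (insert x F)
  then obtain c where c: "c \<in> F" "\<forall>a\<in>F. a / c \<in> W" by blast
  show ?case
  proof (cases "x / c \<in> W")
    case True
    then show ?thesis using c by auto
  next
    case False
    have "x \<noteq> 0" "c \<noteq> 0" using insert c by auto
    then have "c / x \<in> W"
      using False valuation_domainD(2)[OF W, of "x / c"] by (simp add: inverse_divide)
    moreover have "a / x = (a / c) * (c / x)" for a using \<open>c \<noteq> 0\<close> by simp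
    ultimately have "\<forall>a\<in>F. a / x \<in> W"
      using c(2) valuation_domainD(1)[OF W] unfolding subring_def by metis
    moreover have "x / x \<in> W" using valuation_domainD(1)[OF W] by (simp add: subring_def)
    ultimately show ?thesis by blast
  qed
qed

lemma ideal_sum: "is_ideal R I \<Longrightarrow> (\<And>i. i \<in> A \<Longrightarrow> f i \<in> I) \<Longrightarrow> sum f A \<in> I"
  by (induct A rule: infinite_finite_induct) (auto simp: is_ideal_def)

lemma ideal_eq_if_one_mem: "is_ideal R I \<Longrightarrow> 1 \<in> I \<Longrightarrow> I = R"
  unfolding is_ideal_def by (metis mult.right_neutral subsetI subset_antisym)

lemma colon_eq: "qf R = UNIV \<Longrightarrow> colon R I = {x. \<forall>i\<in>I. x * i \<in> R}"
  by (simp add: colon_def)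

lemma mem_rspan: assumes "subring (R::'a::field set)" "finite S" "s \<in> S" shows "s \<in> rspan R S"
proof -
  define c where "c t = (if t = s then 1 else (0::'a))" for t
  have "s = (\<Sum>t\<in>S. c t * t)"
    using assms(2,3) by (simp add: c_def if_distrib[of "\<lambda>c. c * _"] sum.delta cong: if_cong)
  moreover have "\<forall>t\<in>S. c t \<in> R" using assms(1) by (simp add: c_def subring_def)
  ultimately show ?thesis unfolding rspan_def by blast
qed

lemma rspan_subset_ideal: assumes "is_ideal R I" "S \<subseteq> I" shows "rspan R S \<subseteq> I"
proof
  fix x assume "x \<in> rspan R S"
  then obtain c where x: "x = (\<Sum>s\<in>S. c s * s)" and c: "\<forall>s\<in>S. c s \<in> R"
    unfolding rspan_def by blast
  have "c s * s \<in> I" if "s \<in> S" for s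
    using assms c that unfolding is_ideal_def by blast
  then show "x \<in> I" unfolding x by (rule ideal_sum[OF assms(1)])
qed

lemma fin_gen_rspan: "qf R = UNIV \<Longrightarrow> finite S \<Longrightarrow> fin_gen R (rspan R S)"
  unfolding fin_gen_def by blast

lemma colon_rspan:
  assumes R: "subring R" and q: "qf R = UNIV" and S: "finite S"
  shows "colon R (rspan R S) = {x. \<forall>s\<in>S. x * s \<in> R}"
proof (intro set_eqI iffI)
  fix x assume "x \<in> colon R (rspan R S)"
  then show "x \<in> {x. \<forall>s\<in>S. x * s \<in> R}" using mem_rspan[OF R S] unfolding colon_def by blast
next
  fix x assume x: "x \<in> {x. \<forall>s\<in>S. x * s \<in> R}"
  have "x * (\<Sum>s\<in>S. c s * s) \<in> R" if c: "\<forall>s\<in>S. c s \<in> R" for c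
  proof -
    have "x * (\<Sum>s\<in>S. c s * s) = (\<Sum>s\<in>S. c s * (x * s))"
      by (simp add: sum_distrib_left algebra_simps)
    also have "\<dots> \<in> R"
      using x c R unfolding subring_def by (intro subring_sum[OF R]) blast
    finally show ?thesis .
  qed
  then show "x \<in> colon R (rspan R S)" unfolding colon_eq[OF q] rspan_def by blast
qed

lemma ideal_subset_t_op:
  assumes R: "subring R" and q: "qf R = UNIV" and I: "is_ideal R I"
  shows "I \<subseteq> t_op R I"
proof
  fix x assume x: "x \<in> I"
  have "rspan R {x} \<subseteq> I" using I x by (intro rspan_subset_ideal) auto
  moreover have "fin_gen R (rspan R {x})" using fin_gen_rspan[OF q] by simp
  moreover have "colon R (rspan R {x}) = {y. y * x \<in> R}"
    using colon_rspan[OF R q, of "{x}"] by simp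
  then have "x \<in> v_op R (rspan R {x})"
    unfolding v_op_def colon_eq[OF q] by (simp add: mult.commute)
  ultimately show "x \<in> t_op R I" unfolding t_op_def by blast
qed

lemma proper_t_ideal_colon_not_subset:
  assumes R: "subring R" and q: "qf R = UNIV" and m: "t_ideal R m" "m \<noteq> R"
    and S: "finite S" "S \<subseteq> m" "s \<in> S" "s \<noteq> 0"
  shows "\<not> {x. \<forall>s\<in>S. x * s \<in> R} \<subseteq> R"
proof
  assume colon_S: "{x. \<forall>s\<in>S. x * s \<in> R} \<subseteq> R"
  have mI: "is_ideal R m" using m(1) by (simp add: t_ideal_def)
  have "1 \<in> v_op R (rspan R S)"
    using colon_S unfolding v_op_def unfolding colon_rspan[OF R q S(1)] unfolding colon_eq[OF q] by auto
  moreover have "fin_gen R (rspan R S)" using fin_gen_rspan[OF q S(1)] .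
  moreover have "rspan R S \<subseteq> m" using rspan_subset_ideal[OF mI S(2)] .
  ultimately have "1 \<in> t_op R m" unfolding t_op_def by blast
  moreover have "m \<noteq> {0}" using S by blast
  then have "t_op R m = m" using m(1) unfolding t_ideal_def by blast
  ultimately show False using ideal_eq_if_one_mem[OF mI] m(2) by blast
qed

lemma t_op_ideal_quotient_subset:
  assumes R: "subring R" and q: "qf R = UNIV" and m: "is_ideal R m" "t_op R m \<subseteq> m"
    and a: "a \<in> R"
  shows "t_op R {x \<in> R. x * a \<in> m} \<subseteq> {x \<in> R. x * a \<in> m}"
proof
  fix z assume "z \<in> t_op R {x \<in> R. x * a \<in> m}"
  then obtain S where S: "finite S" "rspan R S \<subseteq> {x \<in> R. x * a \<in> m}"
    and z: "z \<in> v_op R (rspan R S)"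
    unfolding t_op_def fin_gen_def by blast
  have z_colon: "\<forall>y. (\<forall>s\<in>S. y * s \<in> R) \<longrightarrow> z * y \<in> R"
    using z unfolding v_op_def unfolding colon_rspan[OF R q S(1)] unfolding colon_eq[OF q] by blast
  have "\<forall>s\<in>S. 1 * s \<in> R" using S(2) mem_rspan[OF R S(1)] by auto
  then have zR: "z \<in> R" using z_colon by fastforce
  have "(a * z) * y \<in> R" if "\<forall>s\<in>(*) a ` S. y * s \<in> R" for y
    using z_colon that by (metis (no_types, lifting) image_eqI mult.assoc mult.commute)
  then have "a * z \<in> v_op R (rspan R ((*) a ` S))"
    unfolding v_op_def unfolding colon_rspan[OF R q finite_imageI[OF S(1)]] unfolding colon_eq[OF q] by blast
  moreover have "fin_gen R (rspan R ((*) a ` S))" using fin_gen_rspan[OF q] S(1) by simp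
  moreover have "rspan R ((*) a ` S) \<subseteq> m"
    using S(2) mem_rspan[OF R S(1)] by (intro rspan_subset_ideal[OF m(1)]) (auto simp: mult.commute)
  ultimately have "a * z \<in> m" using m(2) unfolding t_op_def by blast
  then show "z \<in> {x \<in> R. x * a \<in> m}" using zR by (simp add: mult.commute)
qed

definition prime_ideal :: "'f::field set \<Rightarrow> 'f set \<Rightarrow> bool" where
  "prime_ideal R m \<longleftrightarrow> is_ideal R m \<and> 1 \<notin> m \<and> (\<forall>a\<in>R. \<forall>b\<in>R. a * b \<in> m \<longrightarrow> a \<in> m \<or> b \<in> m)"

lemma t_maximal_prime_ideal:
  assumes R: "subring R" and q: "qf R = UNIV" and m: "t_maximal R m"
  shows "prime_ideal R m"
proof -
  have mI: "is_ideal R m" and mt: "m = {0} \<or> m = t_op R m" and mR: "m \<noteq> R"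
    using m by (auto simp: t_maximal_def t_ideal_def)
  have one: "1 \<notin> m" using ideal_eq_if_one_mem[OF mI] mR by blast
  have "b \<in> m" if ab: "a \<in> R" "b \<in> R" "a * b \<in> m" "a \<notin> m" for a b
  proof (cases "m = {0}")
    case True
    then show ?thesis using ab by auto
  next
    case False
    define N where "N = {x \<in> R. x * a \<in> m}"
    have NI: "is_ideal R N"
      using mI ab(1) R unfolding is_ideal_def N_def subring_def by (simp add: distrib_right mult.assoc)
    have mN: "m \<subseteq> N" using mI ab(1) unfolding N_def is_ideal_def by (auto simp: mult.commute)
    have "t_op R m \<subseteq> m" using mt False by blast
    then have "N = t_op R N"
      using t_op_ideal_quotient_subset[OF R q mI _ ab(1)] ideal_subset_t_op[OF R q NI]
      unfolding N_def by blast
    then have "t_ideal R N" using NI by (simp add: t_ideal_def)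
    moreover have "1 \<notin> N" using ab(4) unfolding N_def by simp
    then have "N \<noteq> R" using R unfolding subring_def by blast
    ultimately have "N = m" using m mN unfolding t_maximal_def by blast
    moreover have "b \<in> N" using ab unfolding N_def by (simp add: mult.commute)
    ultimately show ?thesis by simp
  qed
  then show ?thesis using mI one unfolding prime_ideal_def by blast
qed

section \<open>Localization at a prime ideal\<close>

lemma localize_memI: "a \<in> R \<Longrightarrow> s \<in> R \<Longrightarrow> s \<notin> m \<Longrightarrow> a / s \<in> localize R m"
  unfolding localize_def by blast

lemma subset_localize: "subring R \<Longrightarrow> 1 \<notin> m \<Longrightarrow> R \<subseteq> localize R m"
  using localize_memI[of _ R 1 m] by (auto simp: subring_def)

lemma prime_ideal_nonzero: "prime_ideal R m \<Longrightarrow> s \<notin> m \<Longrightarrow> s \<noteq> 0"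
  unfolding prime_ideal_def is_ideal_def by auto

lemma prime_ideal_mult:
  "prime_ideal R m \<Longrightarrow> a \<in> R \<Longrightarrow> b \<in> R \<Longrightarrow> a \<notin> m \<Longrightarrow> b \<notin> m \<Longrightarrow> a * b \<notin> m"
  unfolding prime_ideal_def by blast

lemma localize_subring:
  assumes R: "subring R" and m: "prime_ideal R m"
  shows "subring (localize R m)"
  unfolding subring_def
proof (intro conjI ballI)
  have "R \<subseteq> localize R m" using subset_localize[OF R] m by (simp add: prime_ideal_def)
  then show "0 \<in> localize R m" "1 \<in> localize R m" using R by (auto simp: subring_def)
  fix x y assume "x \<in> localize R m" "y \<in> localize R m"
  then obtain a s b t where x: "x = a / s" "a \<in> R" "s \<in> R" "s \<notin> m"
    and y: "y = b / t" "b \<in> R" "t \<in> R" "t \<notin> m"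
    unfolding localize_def by blast
  have "s \<noteq> 0" "t \<noteq> 0" using prime_ideal_nonzero[OF m] x y by auto
  then have "x + y = (a * t + b * s) / (s * t)" "x * y = (a * b) / (s * t)" "- x = (- a) / s"
    using x y by (simp_all add: field_simps)
  moreover have "s * t \<in> R" "s * t \<notin> m" using prime_ideal_mult[OF m] x y R by (auto simp: subring_def)
  moreover have "a * t + b * s \<in> R" "a * b \<in> R" "- a \<in> R" using x y R by (simp_all add: subring_def)
  ultimately show "x + y \<in> localize R m" "x * y \<in> localize R m" "- x \<in> localize R m"
    using x(3,4) by (metis localize_memI)+
qed

lemma localize_numerator_in_ideal:
  assumes m: "prime_ideal R m" and x: "x = a / s" "a \<in> R" "s \<in> R" "s \<notin> m"
    and "inverse x \<notin> localize R m"
  shows "a \<in> m"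
  using assms localize_memI[of s R a m] by auto

lemma localize_inverse_of_bezout:
  assumes R: "subring R" and m: "prime_ideal R m"
    and L: "x \<in> localize R m" "z \<in> localize R m" "p \<in> localize R m" "q \<in> localize R m"
    and bezout: "p * x + q * z = 1"
  shows "inverse x \<in> localize R m \<or> inverse z \<in> localize R m"
proof (rule ccontr)
  assume no_inverse: "\<not> (inverse x \<in> localize R m \<or> inverse z \<in> localize R m)"
  obtain a s a' s' b t b' t' where
    x: "x = a / s" "a \<in> R" "s \<in> R" "s \<notin> m" and z: "z = a' / s'" "a' \<in> R" "s' \<in> R" "s' \<notin> m" and
    p: "p = b / t" "b \<in> R" "t \<in> R" "t \<notin> m" and q: "q = b' / t'" "b' \<in> R" "t' \<in> R" "t' \<notin> m"
    using L unfolding localize_def by blast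
  have "a \<in> m" "a' \<in> m"
    using localize_numerator_in_ideal[OF m x] localize_numerator_in_ideal[OF m z] no_inverse by blast+
  have "s \<noteq> 0" "s' \<noteq> 0" "t \<noteq> 0" "t' \<noteq> 0" using prime_ideal_nonzero[OF m] x z p q by auto
  then have "s * s' * t * t' = (b * t' * s') * a + (b' * t * s) * a'"
    using bezout unfolding x z p q by (simp add: field_simps)
  moreover have "(b * t' * s') * a + (b' * t * s) * a' \<in> m"
    using m \<open>a \<in> m\<close> \<open>a' \<in> m\<close> R p q x z unfolding prime_ideal_def is_ideal_def subring_def by simp
  moreover have "s * s' * t * t' \<notin> m"
    using prime_ideal_mult[OF m] R x z p q by (simp add: subring_def)
  ultimately show False by simp
qed

section \<open>Polynomials inside the rational function field\<close>

definition const_fract :: "'a::idom \<Rightarrow> 'a poly fract" where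
  "const_fract a = to_fract [:a:]"

lemma const_fract_0 [simp]: "const_fract 0 = 0"
  and const_fract_add [simp]: "const_fract (a + b) = const_fract a + const_fract b"
  and const_fract_mult [simp]: "const_fract (a * b) = const_fract a * const_fract b"
  and const_fract_eq_0_iff [simp]: "const_fract a = 0 \<longleftrightarrow> a = 0"
  by (simp_all add: const_fract_def flip: to_fract_mult to_fract_add)

lemma const_fract_1 [simp]: "const_fract 1 = 1"
  by (simp add: const_fract_def flip: one_pCons)

lemma const_fract_power [simp]: "const_fract (a ^ n) = const_fract a ^ n"
  by (induct n) simp_all

lemma const_fract_sum [simp]: "const_fract (sum f A) = (\<Sum>a\<in>A. const_fract (f a))"
  by (induct A rule: infinite_finite_induct) simp_all

lemma const_fract_inverse [simp]: "const_fract (inverse (a::'a::field)) = inverse (const_fract a)"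
proof (cases "a = 0")
  case False
  then have "const_fract a * const_fract (inverse a) = 1"
    by (simp del: const_fract_mult add: const_fract_mult[symmetric])
  then show ?thesis by (simp add: inverse_unique)
qed simp

lemma const_fract_divide [simp]: "const_fract ((a::'a::field) / b) = const_fract a / const_fract b"
  by (simp add: divide_inverse)

lemma const_fract_power_int [simp]: "const_fract ((a::'a::field) powi k) = const_fract a powi k"
  by (simp add: power_int_def)

lemma to_fract_power: "to_fract (p ^ n) = to_fract p ^ n"
  by (induct n) simp_all

lemma to_fract_smult: "to_fract (smult c p) = const_fract c * to_fract p"
  by (simp add: const_fract_def flip: to_fract_mult)

(* Only usable instantiated: the right-hand side contains pCons again. *)
lemma to_fract_pCons: "to_fract (pCons a p) = const_fract a + to_fract [:0, 1:] * to_fract p"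
proof -
  have "pCons a p = [:a:] + [:0, 1:] * p" by simp
  then show ?thesis by (simp add: const_fract_def flip: to_fract_mult to_fract_add)
qed

lemma subring_range_to_fract: "subring (range (to_fract :: 'a::idom \<Rightarrow> 'a fract))"
  unfolding subring_def
proof (intro conjI ballI)
  show "0 \<in> range to_fract" "1 \<in> range to_fract" by (metis rangeI to_fract_0, metis rangeI to_fract_1)
  fix x y :: "'a fract" assume "x \<in> range to_fract" "y \<in> range to_fract"
  then obtain a b where "x = to_fract a" "y = to_fract b" by blast
  then show "x + y \<in> range to_fract" "x * y \<in> range to_fract" "- x \<in> range to_fract"
    by (simp_all flip: to_fract_add to_fract_mult to_fract_uminus)
qed

lemma poly_part_eq: "poly_part W = W \<inter> range to_fract"
  by (auto simp: poly_part_def to_fract_def)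

lemma poly_part_subring: "subring W \<Longrightarrow> subring (poly_part W)"
  by (simp add: poly_part_eq subring_Int subring_range_to_fract)

lemma to_fract_in_subringI:
  assumes W: "subring W" "to_fract [:0, 1:] \<in> W" and coeffs: "\<And>i. const_fract (coeff p i) \<in> W"
  shows "to_fract p \<in> W"
  using coeffs
proof (induct p)
  case 0
  then show ?case using W(1) by (simp add: subring_def)
next
  case (pCons a p)
  have "const_fract a \<in> W" using pCons(3)[of 0] by simp
  moreover have "to_fract p \<in> W" using pCons(2) pCons(3)[of "Suc i" for i] by simp
  ultimately show ?case
    unfolding to_fract_pCons[of a p] using W by (intro subring_add subring_mult) simp_all
qed

lemma exists_const_smult_in:
  fixes W :: "'a::field poly fract set"
  assumes W: "valuation_domain W" "to_fract [:0, 1:] \<in> W" and F: "finite F"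
  shows "\<exists>c. c \<noteq> 0 \<and> (\<forall>p\<in>F. to_fract (smult c p) \<in> W)"
proof -
  define A where "A = insert 1 ((\<Union>p\<in>F. range (coeff p)) - {0})"
  have "finite A" using F by (simp add: A_def range_coeff)
  moreover have "0 \<notin> const_fract ` A" by (auto simp: A_def)
  moreover have "A \<noteq> {}" by (simp add: A_def)
  ultimately obtain c where c: "c \<in> A" "\<forall>a\<in>A. const_fract a / const_fract c \<in> W"
    using valuation_domain_divides_all[OF W(1), of "const_fract ` A"] by auto
  have c0: "c \<noteq> 0" using c(1) by (auto simp: A_def)
  have "const_fract (coeff (smult (inverse c) p) i) \<in> W" if "p \<in> F" for p i
  proof (cases "coeff p i = 0")
    case True
    then show ?thesis using valuation_domainD(1)[OF W(1)] by (simp add: subring_def)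
  next
    case False
    then have "coeff p i \<in> A" using that by (auto simp: A_def)
    then show ?thesis using c(2) by (simp add: field_simps)
  qed
  then show ?thesis
    using c0 to_fract_in_subringI[OF valuation_domainD(1)[OF W(1)] W(2)] by (metis inverse_nonzero_iff_nonzero)
qed

lemma qf_poly_part:
  fixes W :: "'a::field poly fract set"
  assumes W: "valuation_domain W" "to_fract [:0, 1:] \<in> W"
  shows "qf (poly_part W) = UNIV"
proof -
  have "y \<in> qf (poly_part W)" for y
  proof (cases y)
    case (Fract p q)
    obtain c where c: "c \<noteq> 0" "to_fract (smult c p) \<in> W" "to_fract (smult c q) \<in> W"
      using exists_const_smult_in[OF W, of "{p, q}"] by auto
    have "y = to_fract (smult c p) / to_fract (smult c q)"
      using Fract c(1) by (simp add: to_fract_smult Fract_conv_to_fract)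
    moreover have "to_fract (smult c q) \<noteq> 0" using Fract c(1) by simp
    ultimately show ?thesis using c(2,3) unfolding qf_def poly_part_eq by blast
  qed
  then show ?thesis by auto
qed

lemma poly_bezout_after_common_factor:
  "\<exists>d p' q' u w. p = d * p' \<and> q = d * q' \<and> u * p' + w * q' = (1::'a::field poly)"
proof (induction q arbitrary: p rule: measure_induct_rule[where f="\<lambda>q. if q = 0 then 0 else Suc (degree q)"])
  case (less q)
  show ?case
  proof (cases "q = 0")
    case True
    then show ?thesis by (intro exI[of _ p] exI[of _ 1] exI[of _ 0]) simp
  next
    case False
    have "(if p mod q = 0 then 0 else Suc (degree (p mod q))) < (if q = 0 then 0 else Suc (degree q))"
      using False degree_mod_less'[OF False] by auto
    then obtain d q' r' u w where IH: "q = d * q'" "p mod q = d * r'" "u * q' + w * r' = 1"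
      using less by blast
    have "p = d * ((p div q) * q' + r')"
      using IH div_mult_mod_eq[of p q] by (simp add: algebra_simps)
    moreover have "w * ((p div q) * q' + r') + (u - w * (p div q)) * q' = 1"
      using IH(3) by (simp add: algebra_simps)
    ultimately show ?thesis using IH(1) by blast
  qed
qed

lemma valuation_domain_localize_if_polys:
  fixes R :: "'a::field poly fract set"
  assumes R: "subring R" and m: "prime_ideal R m" and polys: "range to_fract \<subseteq> localize R m"
  shows "valuation_domain (localize R m)"
proof -
  have L: "subring (localize R m)" by (rule localize_subring[OF R m])
  have "y \<in> localize R m \<or> inverse y \<in> localize R m" for y
  proof (cases y)
    case (Fract p q)
    obtain d p' q' u w where pq: "p = d * p'" "q = d * q'" and bezout: "u * p' + w * q' = 1"
      using poly_bezout_after_common_factor by blast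
    have y: "y = to_fract p' * inverse (to_fract q')"
      using Fract pq by (simp add: Fract_conv_to_fract divide_inverse)
    have "to_fract u * to_fract p' + to_fract w * to_fract q' = 1"
      using bezout by (simp flip: to_fract_mult to_fract_add)
    then have "inverse (to_fract p') \<in> localize R m \<or> inverse (to_fract q') \<in> localize R m"
      using localize_inverse_of_bezout[OF R m] polys by blast
    moreover have "inverse y = to_fract q' * inverse (to_fract p')" using y by (simp add: mult.commute)
    ultimately show ?thesis using y polys L unfolding subring_def by auto
  qed
  then show ?thesis using L by (simp add: valuation_domain_def valuation_domain_in_def)
qed

lemma map_poly_of_rat_add: "map_poly of_rat (p + q) = map_poly of_rat p + map_poly of_rat q"
  by (intro poly_eqI) (simp add: coeff_map_poly of_rat_add)

lemma map_poly_of_rat_mult: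
  "(map_poly of_rat (p * q) :: 'k::field_char_0 poly) = map_poly of_rat p * map_poly of_rat q"
  by (induct p) (simp_all add: map_poly_of_rat_add map_poly_smult of_rat_mult map_poly_pCons)

lemma map_poly_of_rat_eq_0_iff: "(map_poly of_rat p :: 'k::field_char_0 poly) = 0 \<longleftrightarrow> p = 0"
  by (rule map_poly_eq_0_iff) auto

lemma map_poly_of_rat_power:
  "(map_poly of_rat (p ^ n) :: 'k::field_char_0 poly) = map_poly of_rat p ^ n"
  by (induct n) (simp_all add: map_poly_of_rat_mult)

(* The embedding \<rat>(X) \<rightarrow> K(X); by of_rat_fract_Fract the chosen representative is irrelevant. *)
definition of_rat_fract :: "rat poly fract \<Rightarrow> 'k::field_char_0 poly fract" where
  "of_rat_fract x = (SOME y. \<exists>p q. q \<noteq> 0 \<and> x = Fract p q \<and> y = Fract (map_poly of_rat p) (map_poly of_rat q))"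

lemma of_rat_fract_Fract:
  assumes "q \<noteq> 0"
  shows "(of_rat_fract (Fract p q) :: 'k::field_char_0 poly fract) =
    Fract (map_poly of_rat p) (map_poly of_rat q)"
proof -
  let ?P = "\<lambda>y :: 'k poly fract. \<exists>p' q'. q' \<noteq> 0 \<and> Fract p q = Fract p' q' \<and> y = Fract (map_poly of_rat p') (map_poly of_rat q')"
  have "?P (Fract (map_poly of_rat p) (map_poly of_rat q))" using assms by blast
  then have "?P (of_rat_fract (Fract p q))" unfolding of_rat_fract_def by (rule someI)
  then obtain p' q' where q': "q' \<noteq> 0" "Fract p q = Fract p' q'"
    and y: "(of_rat_fract (Fract p q) :: 'k poly fract) = Fract (map_poly of_rat p') (map_poly of_rat q')"
    by blast
  have "p * q' = p' * q" using q' assms by (simp add: eq_fract)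
  then have "map_poly of_rat p * map_poly of_rat q' = (map_poly of_rat p' * map_poly of_rat q :: 'k poly)"
    by (metis map_poly_of_rat_mult)
  moreover have "(map_poly of_rat q :: 'k poly) \<noteq> 0" "(map_poly of_rat q' :: 'k poly) \<noteq> 0"
    using q'(1) assms by (simp_all add: map_poly_of_rat_eq_0_iff)
  ultimately show ?thesis using y by (metis eq_fract(1))
qed

lemma of_rat_fract_to_fract [simp]: "of_rat_fract (to_fract p) = to_fract (map_poly of_rat p)"
  by (simp add: to_fract_def of_rat_fract_Fract)

lemma of_rat_fract_const_fract [simp]: "of_rat_fract (const_fract r) = const_fract (of_rat r)"
  by (simp add: const_fract_def map_poly_pCons)

lemma of_rat_fract_0 [simp]: "of_rat_fract 0 = 0"
  using of_rat_fract_to_fract[of 0] by simp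

lemma of_rat_fract_add: "of_rat_fract (x + y) = of_rat_fract x + of_rat_fract y"
  by (cases x, cases y)
    (simp add: of_rat_fract_Fract map_poly_of_rat_add map_poly_of_rat_mult map_poly_of_rat_eq_0_iff)

lemma of_rat_fract_mult: "of_rat_fract (x * y) = of_rat_fract x * of_rat_fract y"
  by (cases x, cases y) (simp add: of_rat_fract_Fract map_poly_of_rat_mult)

lemma of_rat_fract_inverse: "of_rat_fract (inverse x) = inverse (of_rat_fract x)"
proof (cases x)
  case (Fract p q)
  then show ?thesis
    by (cases "p = 0") (simp_all add: of_rat_fract_Fract map_poly_of_rat_eq_0_iff fract_collapse)
qed

lemma of_rat_fract_1: "of_rat_fract 1 = 1"
  using of_rat_fract_to_fract[of 1] by simp

section \<open>Inverses of algebraic elements\<close>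

lemma field_hom_basics:
  fixes \<phi> :: "'a::field \<Rightarrow> 'b::field"
  assumes add: "\<And>u v. \<phi> (u + v) = \<phi> u + \<phi> v" and mult: "\<And>u v. \<phi> (u * v) = \<phi> u * \<phi> v"
    and one: "\<phi> 1 = 1"
  shows "\<phi> 0 = 0" and "\<phi> (- u) = - \<phi> u" and "\<phi> (inverse u) = inverse (\<phi> u)"
proof -
  have "\<phi> 0 + \<phi> 0 = \<phi> 0 + 0" using add[of 0 0] by simp
  then show zero: "\<phi> 0 = 0" by (simp only: add_left_cancel)
  have "\<phi> u + \<phi> (- u) = 0" using add[of u "- u"] zero by simp
  then show "\<phi> (- u) = - \<phi> u" by (rule minus_unique[symmetric])
  show "\<phi> (inverse u) = inverse (\<phi> u)"
  proof (cases "u = 0")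
    case False
    then have "\<phi> u * \<phi> (inverse u) = 1" by (simp flip: mult add: one)
    then show ?thesis by (simp add: inverse_unique)
  qed (simp add: zero)
qed

lemma inverse_from_power_relation:
  fixes x :: "'a::field"
  assumes I: "finite I" "j \<in> I" "\<And>i. i \<in> I \<Longrightarrow> j \<le> i" and aj: "a j \<noteq> 0"
    and rel: "(\<Sum>i\<in>I. a i * x ^ i) = 0" and x: "x \<noteq> 0"
  shows "inverse x = (\<Sum>i\<in>I - {j}. (- a i / a j) * x ^ (i - j - 1))"
proof -
  define T where "T = (\<Sum>i\<in>I - {j}. a i * x ^ (i - j - 1))"
  have "(\<Sum>i\<in>I - {j}. a i * x ^ i) = x ^ j * x * T"
    unfolding T_def sum_distrib_left
  proof (rule sum.cong)
    fix i assume "i \<in> I - {j}"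
    then have "i = j + Suc (i - j - 1)" using I(3) by fastforce
    then have "x ^ i = x ^ j * x * x ^ (i - j - 1)" by (metis power_Suc power_add mult.assoc)
    then show "a i * x ^ i = x ^ j * x * (a i * x ^ (i - j - 1))" by simp
  qed simp
  then have "x ^ j * (a j + x * T) = (\<Sum>i\<in>I. a i * x ^ i)"
    using I(1,2) by (simp add: sum.remove algebra_simps)
  then have "x * T = - a j" using rel x by (simp add: eq_neg_iff_add_eq_0 add.commute)
  then have "inverse x = - T / a j" using x aj by (simp add: field_simps)
  then show ?thesis by (simp add: T_def sum_divide_distrib flip: sum_negf)
qed

lemma powers_dependent_if_finite_span:
  fixes \<phi> :: "'a::field \<Rightarrow> 'b::field" and b :: "'c \<Rightarrow> 'b"
  assumes add: "\<And>u v. \<phi> (u + v) = \<phi> u + \<phi> v" and mult: "\<And>u v. \<phi> (u * v) = \<phi> u * \<phi> v"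
    and one: "\<phi> 1 = 1" and S: "finite S" and span: "\<And>n. \<exists>u. x ^ n = (\<Sum>s\<in>S. \<phi> (u s) * b s)"
  shows "\<exists>c I. finite I \<and> I \<noteq> {} \<and> (\<forall>i\<in>I. c i \<noteq> 0) \<and> (\<Sum>i\<in>I. \<phi> (c i) * x ^ i) = 0"
proof -
  note hom = field_hom_basics[of \<phi>, OF add mult one]
  interpret vs: vector_space "\<lambda>c v. \<phi> c * v"
    by unfold_locales (simp_all add: add mult one algebra_simps)
  define n where "n = card (b ` S)"
  show ?thesis
  proof (cases "inj_on (\<lambda>i. x ^ i) {..n}")
    case True
    define P where "P = (\<lambda>i. x ^ i) ` {..n}"
    have P_span: "P \<subseteq> vs.span (b ` S)"
    proof
      fix v assume "v \<in> P"
      then obtain u where "v = (\<Sum>s\<in>S. \<phi> (u s) * b s)" using span unfolding P_def by blast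
      then show "v \<in> vs.span (b ` S)" by (simp add: vs.span_sum vs.span_scale vs.span_base)
    qed
    have "vs.dependent P"
    proof (rule ccontr)
      assume "\<not> vs.dependent P"
      then have "card P \<le> n"
        using vs.independent_span_bound[OF finite_imageI[OF S] _ P_span] n_def by blast
      moreover have "card P = n + 1" using True by (simp add: P_def card_image)
      ultimately show False by simp
    qed
    then obtain t u v where t: "finite t" "t \<subseteq> P" "(\<Sum>v\<in>t. \<phi> (u v) * v) = 0"
      and v: "v \<in> t" "u v \<noteq> 0"
      unfolding vs.dependent_explicit by blast
    define I where "I = {i \<in> {..n}. x ^ i \<in> t \<and> u (x ^ i) \<noteq> 0}"
    define c where "c i = u (x ^ i)" for i
    have "inj_on (\<lambda>i. x ^ i) I" by (rule inj_on_subset[OF True]) (auto simp: I_def)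
    moreover have "{v \<in> t. u v \<noteq> 0} = (\<lambda>i. x ^ i) ` I" using t(2) by (auto simp: I_def P_def)
    ultimately have "(\<Sum>v\<in>{v \<in> t. u v \<noteq> 0}. \<phi> (u v) * v) = (\<Sum>i\<in>I. \<phi> (c i) * x ^ i)"
      by (simp add: sum.reindex c_def)
    moreover have "(\<Sum>v\<in>{v \<in> t. u v \<noteq> 0}. \<phi> (u v) * v) = (\<Sum>v\<in>t. \<phi> (u v) * v)"
      using t(1) by (intro sum.mono_neutral_left) (auto simp: hom(1))
    ultimately have "(\<Sum>i\<in>I. \<phi> (c i) * x ^ i) = 0" using t(3) by simp
    moreover obtain i where "i \<le> n" "v = x ^ i" using v(1) t(2) unfolding P_def by blast
    then have "i \<in> I" using v unfolding I_def by simp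
    moreover have "finite I" "\<forall>i\<in>I. c i \<noteq> 0" by (simp_all add: I_def c_def)
    ultimately show ?thesis by blast
  next
    case False
    then obtain i j where ij: "i < j" "x ^ i = x ^ j" unfolding inj_on_def by (metis linorder_neqE_nat)
    define c where "c k = (if k = i then 1 else - 1 :: 'a)" for k
    have "(\<Sum>k\<in>{i, j}. \<phi> (c k) * x ^ k) = 0" using ij by (simp add: c_def hom(2) one)
    then show ?thesis by (intro exI[of _ c] exI[of _ "{i, j}"]) (simp add: c_def)
  qed
qed

lemma inverse_in_algebra_if_finite_span:
  fixes \<phi> :: "'a::field \<Rightarrow> 'b::field" and b :: "'c \<Rightarrow> 'b"
  assumes add: "\<And>u v. \<phi> (u + v) = \<phi> u + \<phi> v" and mult: "\<And>u v. \<phi> (u * v) = \<phi> u * \<phi> v"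
    and one: "\<phi> 1 = 1" and S: "finite S" and span: "\<And>n. \<exists>u. x ^ n = (\<Sum>s\<in>S. \<phi> (u s) * b s)"
    and x: "x \<noteq> 0"
  shows "\<exists>c e (I::nat set). finite I \<and> inverse x = (\<Sum>i\<in>I. \<phi> (c i) * x ^ e i)"
proof -
  note hom = field_hom_basics[of \<phi>, OF add mult one]
  obtain c I where I: "finite I" "I \<noteq> {}" "\<forall>i\<in>I. c i \<noteq> 0" and rel: "(\<Sum>i\<in>I. \<phi> (c i) * x ^ i) = 0"
    using powers_dependent_if_finite_span[OF add mult one S span] by blast
  define j where "j = Min I"
  have j: "j \<in> I" "\<And>i. i \<in> I \<Longrightarrow> j \<le> i" using I(1,2) by (simp_all add: j_def)
  have "\<phi> (c j) * \<phi> (inverse (c j)) = 1" using j(1) I(3) by (simp flip: mult add: one)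
  then have "\<phi> (c j) \<noteq> 0" by auto
  then have "inverse x = (\<Sum>i\<in>I - {j}. (- \<phi> (c i) / \<phi> (c j)) * x ^ (i - j - 1))"
    using inverse_from_power_relation[where a = "\<lambda>i. \<phi> (c i)", OF I(1) j _ rel x] by simp
  also have "\<dots> = (\<Sum>i\<in>I - {j}. \<phi> (- c i / c j) * x ^ (i - j - 1))"
    by (simp add: divide_inverse mult hom(2,3))
  finally show ?thesis
    using I(1) by (intro exI[of _ "\<lambda>i. - c i / c j"] exI[of _ "\<lambda>i. i - j - 1"] exI[of _ "I - {j}"]) simp
qed

lemma finite_ext_Q_inverse:
  fixes c :: "'k::field_char_0"
  assumes "finite_ext_Q TYPE('k)" "c \<noteq> 0"
  shows "\<exists>a e (I::nat set). finite I \<and> inverse c = (\<Sum>i\<in>I. of_rat (a i) * c ^ e i)"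
proof -
  obtain S :: "'k set" where S: "finite S" "\<forall>x. \<exists>u. x = (\<Sum>s\<in>S. of_rat (u s) * s)"
    using assms(1) unfolding finite_ext_Q_def by blast
  show ?thesis
    by (rule inverse_in_algebra_if_finite_span[where b = "\<lambda>s. s", OF of_rat_add of_rat_mult of_rat_1 S(1)])
      (use S(2) assms(2) in auto)
qed

lemma poly_rational_decomposition:
  fixes f :: "'k::field_char_0 poly"
  assumes S: "\<forall>x. \<exists>u. x = (\<Sum>s\<in>S. of_rat (u s) * s)"
  shows "\<exists>P. f = (\<Sum>s\<in>S. smult s (map_poly of_rat (P s)))"
proof -
  have "\<forall>i. \<exists>w. coeff f i = (\<Sum>s\<in>S. of_rat (w s) * s)" using S by blast
  then obtain u where u: "\<And>i. coeff f i = (\<Sum>s\<in>S. of_rat (u i s) * s)" by (metis choice)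
  define P where "P s = (\<Sum>i\<le>degree f. monom (u i s) i)" for s
  have "coeff f n = coeff (\<Sum>s\<in>S. smult s (map_poly of_rat (P s))) n" for n
  proof (cases "n \<le> degree f")
    case True
    then show ?thesis by (simp add: P_def u coeff_sum coeff_map_poly coeff_monom mult.commute)
  next
    case False
    then show ?thesis by (simp add: P_def coeff_sum coeff_map_poly coeff_monom coeff_eq_0)
  qed
  then show ?thesis by (blast intro: poly_eqI)
qed

lemma exists_common_denominator:
  fixes A :: "'a::idom fract set"
  assumes "finite A"
  shows "\<exists>d. d \<noteq> 0 \<and> (\<forall>a\<in>A. to_fract d * a \<in> range to_fract)"
  using assms
proof (induct A)
  case empty
  then show ?case by (intro exI[of _ 1]) simp
next
  case (insert x A)
  then obtain d where d: "d \<noteq> 0" "\<forall>a\<in>A. to_fract d * a \<in> range to_fract" by blast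
  obtain p q where "x = Fract p q" and q: "q \<noteq> 0" by (cases x) blast
  then have x: "x = to_fract p / to_fract q" by (simp only: Fract_conv_to_fract)
  have "to_fract (d * q) * a \<in> range to_fract" if "a \<in> insert x A" for a
  proof (cases "a = x")
    case True
    then have "to_fract (d * q) * a = to_fract (d * p)" using x q by simp
    then show ?thesis by (metis rangeI)
  next
    case False
    then have "to_fract d * a \<in> range to_fract" using d(2) that by simp
    then obtain b where "to_fract d * a = to_fract b" by (metis rangeE)
    then have "to_fract (d * q) * a = to_fract (q * b)" by (simp add: ac_simps)
    then show ?thesis by (metis rangeI)
  qed
  moreover have "d * q \<noteq> 0" using d(1) q by simp
  ultimately show ?case by blast
qed

lemma finite_ext_Q_dvd_rational_poly:
  fixes g :: "'k::field_char_0 poly"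
  assumes "finite_ext_Q TYPE('k)" "g \<noteq> 0"
  shows "\<exists>q. q \<noteq> 0 \<and> g dvd map_poly of_rat q"
proof -
  obtain S :: "'k set" where S: "finite S" "\<forall>x. \<exists>u. x = (\<Sum>s\<in>S. of_rat (u s) * s)"
    using assms(1) unfolding finite_ext_Q_def by blast
  have span: "\<exists>u. to_fract g ^ n = (\<Sum>s\<in>S. of_rat_fract (u s) * const_fract s)" for n
  proof -
    obtain P where "g ^ n = (\<Sum>s\<in>S. smult s (map_poly of_rat (P s)))"
      using poly_rational_decomposition[OF S(2)] by blast
    then have "to_fract g ^ n = (\<Sum>s\<in>S. of_rat_fract (to_fract (P s)) * const_fract s)"
      by (simp add: to_fract_smult mult.commute flip: to_fract_power)
    then show ?thesis by (rule exI[of _ "\<lambda>s. to_fract (P s)"])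
  qed
  have "to_fract g \<noteq> 0" using assms(2) by simp
  then obtain c e and I :: "nat set" where I: "finite I"
    and inv: "inverse (to_fract g) = (\<Sum>i\<in>I. of_rat_fract (c i) * to_fract g ^ e i)"
    using inverse_in_algebra_if_finite_span[OF of_rat_fract_add of_rat_fract_mult of_rat_fract_1 S(1) span]
    by blast
  obtain d where d: "d \<noteq> 0" "\<forall>a\<in>c ` I. to_fract d * a \<in> range to_fract"
    using exists_common_denominator[of "c ` I"] I by blast
  then have "\<forall>i\<in>I. \<exists>p. to_fract d * c i = to_fract p" by (simp add: image_iff)
  then obtain h where h: "\<And>i. i \<in> I \<Longrightarrow> to_fract d * c i = to_fract (h i)"
    using bchoice by metis
  define H where "H = (\<Sum>i\<in>I. map_poly of_rat (h i) * g ^ e i)"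
  have "to_fract (map_poly of_rat d) * inverse (to_fract g)
      = (\<Sum>i\<in>I. of_rat_fract (to_fract d * c i) * to_fract g ^ e i)"
    by (simp add: inv sum_distrib_left of_rat_fract_mult mult.assoc)
  also have "\<dots> = to_fract H"
    using h by (simp add: H_def to_fract_power)
  finally have "map_poly of_rat d = g * H"
    using assms(2) by (simp add: field_simps flip: to_fract_mult)
  then have "g dvd map_poly of_rat d" by simp
  with d(1) show ?thesis by blast
qed

lemma DVR_power_mult_power_int_unit:
  assumes V: "DVR V" and r: "r \<in> V" "inverse r \<notin> V" and x: "x \<noteq> 0"
  shows "\<exists>n k. 0 < n \<and> x ^ n * r powi k \<in> V \<and> inverse (x ^ n * r powi k) \<in> V"
proof -
  obtain v :: "'a \<Rightarrow> int" where
    v_mult: "\<And>x y. x \<noteq> 0 \<Longrightarrow> y \<noteq> 0 \<Longrightarrow> v (x * y) = v x + v y" and V_eq: "V = {x. x = 0 \<or> v x \<ge> 0}"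
    using V unfolding DVR_def by blast
  have v_1: "v 1 = 0" using v_mult[of 1 1] by simp
  have v_inverse: "v (inverse y) = - v y" if "y \<noteq> 0" for y
    using v_mult[of y "inverse y"] v_1 that by simp
  have v_power: "v (y ^ n) = int n * v y" if "y \<noteq> 0" for y n
    using that by (induct n) (simp_all add: v_1 v_mult algebra_simps)
  have v_power_int: "v (y powi k) = k * v y" if "y \<noteq> 0" for y k
    using that by (simp add: power_int_def v_power v_inverse)
  have r0: "r \<noteq> 0" using r V_eq by auto
  have "v r \<noteq> 0" using r(2) r0 V_eq v_inverse by auto
  then have vr: "v r > 0" using r(1) r0 V_eq by simp
  define y where "y = x ^ nat (v r) * r powi (- v x)" \<comment> \<open>of value \<open>v r * v x - v x * v r\<close>\<close>
  have y0: "y \<noteq> 0" using x r0 by (simp add: y_def)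
  have "v y = 0" using x r0 vr by (simp add: y_def v_mult v_power v_power_int)
  then have "y \<in> V \<and> inverse y \<in> V" using y0 v_inverse V_eq by simp
  then show ?thesis using vr unfolding y_def by (intro exI[of _ "nat (v r)"] exI[of _ "- v x"]) simp
qed

lemma const_in_prime_ideal_if_poly_notin_localize:
  fixes W :: "'a::field poly fract set"
  assumes W: "valuation_domain W" "to_fract [:0, 1:] \<in> W"
    and m: "prime_ideal (poly_part W) m" and p: "to_fract p \<notin> localize (poly_part W) m"
  shows "\<exists>c. c \<noteq> 0 \<and> const_fract c \<in> m"
proof -
  obtain c where c: "c \<noteq> 0" "to_fract (smult c p) \<in> W" "to_fract (smult c 1) \<in> W"
    using exists_const_smult_in[OF W, of "{p, 1}"] by auto
  have "const_fract c \<in> poly_part W" "to_fract (smult c p) \<in> poly_part W"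
    using c(2,3) by (auto simp: poly_part_eq const_fract_def)
  moreover have "to_fract p = to_fract (smult c p) / const_fract c" using c(1) by (simp add: to_fract_smult)
  ultimately have "const_fract c \<in> m" using p localize_memI by metis
  with c(1) show ?thesis by blast
qed

lemma inverse_notin_if_t_ideal_contains_const:
  fixes W :: "'a::field poly fract set"
  assumes W: "valuation_domain W" "to_fract [:0, 1:] \<in> W"
    and m: "t_ideal (poly_part W) m" "m \<noteq> poly_part W" and c: "c \<noteq> 0" "const_fract c \<in> m"
    and s: "s \<in> m" "s \<noteq> 0"
  shows "inverse s \<notin> W"
proof
  assume s_inv: "inverse s \<in> W"
  have "{x. \<forall>t\<in>{const_fract c, s}. x * t \<in> poly_part W} \<subseteq> poly_part W"
  proof
    fix x assume "x \<in> {x. \<forall>t\<in>{const_fract c, s}. x * t \<in> poly_part W}"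
    then have xc: "x * const_fract c \<in> poly_part W" and xs: "x * s \<in> W"
      by (auto simp: poly_part_eq)
    from xc obtain p where "x * const_fract c = to_fract p" by (auto simp: poly_part_eq)
    then have "x = to_fract (smult (inverse c) p)" using c(1) by (simp add: to_fract_smult field_simps)
    moreover have "x = (x * s) * inverse s" using s(2) by simp
    then have "x \<in> W" using subring_mult[OF valuation_domainD(1)[OF W(1)] xs s_inv] by metis
    ultimately show "x \<in> poly_part W" by (simp add: poly_part_eq)
  qed
  moreover have "\<not> {x. \<forall>t\<in>{const_fract c, s}. x * t \<in> poly_part W} \<subseteq> poly_part W"
    using c s by (intro proper_t_ideal_colon_not_subset[OF poly_part_subring[OF valuation_domainD(1)[OF W(1)]]
        qf_poly_part[OF W] m, of _ "const_fract c"]) auto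
  ultimately show False by contradiction
qed

lemma exists_rational_nonunit:
  fixes W :: "'k::field_char_0 poly fract set"
  assumes K: "finite_ext_Q TYPE('k)" and W: "valuation_domain W"
    and c: "const_fract c \<in> W" "inverse (const_fract c) \<notin> W"
  shows "\<exists>r. const_fract (of_rat r) \<in> W \<and> inverse (const_fract (of_rat r)) \<notin> W"
proof (rule ccontr)
  assume no_rational: "\<not> (\<exists>r. const_fract (of_rat r) \<in> W \<and> inverse (const_fract (of_rat r)) \<notin> W)"
  have sW: "subring W" by (rule valuation_domainD(1)[OF W])
  have rat_W: "const_fract (of_rat r) \<in> W" for r
  proof (cases "r = 0")
    case False
    have "inverse (const_fract (of_rat r)) \<in> W \<Longrightarrow> inverse (inverse (const_fract (of_rat r))) \<in> W"
      using no_rational by (metis const_fract_inverse of_rat_inverse)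
    then show ?thesis using valuation_domainD(2)[OF W, of "const_fract (of_rat r)"] False by auto
  qed (simp add: subring_0[OF sW])
  have "c \<noteq> 0" using c(2) subring_0[OF sW] by auto
  then obtain a e and I :: "nat set" where "inverse c = (\<Sum>i\<in>I. of_rat (a i) * c ^ e i)"
    using finite_ext_Q_inverse[OF K] by blast
  then have "inverse (const_fract c) = (\<Sum>i\<in>I. const_fract (of_rat (a i)) * const_fract c ^ e i)"
    by (simp flip: const_fract_inverse)
  also have "\<dots> \<in> W"
    using rat_W c(1) by (intro subring_sum[OF sW] subring_mult[OF sW] subring_power[OF sW])
  finally show False using c(2) by contradiction
qed

lemma exists_poly_multiple_unit:
  fixes W :: "'k::field_char_0 poly fract set" and V :: "rat poly fract set"
  assumes K: "finite_ext_Q TYPE('k)" and V: "DVR V" and VW: "\<And>x. x \<in> V \<longleftrightarrow> of_rat_fract x \<in> W"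
    and r: "const_fract r \<in> V" "inverse (const_fract r) \<notin> V" and g: "g \<noteq> 0"
  shows "\<exists>u. g * u \<noteq> 0 \<and> to_fract (g * u) \<in> W \<and> inverse (to_fract (g * u)) \<in> W"
proof -
  obtain q where q: "q \<noteq> 0" and "g dvd map_poly of_rat q"
    using finite_ext_Q_dvd_rational_poly[OF K g] by blast
  then obtain h where h: "map_poly of_rat q = g * h" by (elim dvdE)
  obtain n k where n: "0 < n"
    and unit: "to_fract q ^ n * const_fract r powi k \<in> V" "inverse (to_fract q ^ n * const_fract r powi k) \<in> V"
    using DVR_power_mult_power_int_unit[OF V r, of "to_fract q"] q by auto
  have r0: "r \<noteq> 0" using r by auto
  define y where "y = smult (r powi k) (q ^ n)"
  have y: "to_fract y = to_fract q ^ n * const_fract r powi k"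
    by (simp add: y_def to_fract_smult to_fract_power mult.commute)
  obtain n' where n': "n = Suc n'" using n by (cases n) auto
  define u where "u = smult (of_rat (r powi k)) (h * (g * h) ^ n')"
  have "map_poly of_rat y = g * u"
    by (simp add: y_def u_def n' map_poly_smult of_rat_mult map_poly_of_rat_mult map_poly_of_rat_power h
        mult_ac)
  moreover have "y \<noteq> 0" using q r0 by (simp add: y_def)
  moreover have "of_rat_fract (to_fract y) \<in> W" "of_rat_fract (inverse (to_fract y)) \<in> W"
    using unit VW by (simp_all add: y)
  ultimately show ?thesis
    by (intro exI[of _ u]) (auto simp: of_rat_fract_inverse map_poly_of_rat_eq_0_iff)
qed

lemma valuation_domain_subset_localize:
  fixes W :: "'k::field_char_0 poly fract set" and V :: "rat poly fract set"
  assumes K: "finite_ext_Q TYPE('k)" and V: "DVR V" and VW: "\<And>x. x \<in> V \<longleftrightarrow> of_rat_fract x \<in> W"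
    and W: "valuation_domain W" "to_fract [:0, 1:] \<in> W"
    and m: "t_ideal (poly_part W) m" "m \<noteq> poly_part W" and c: "c \<noteq> 0" "const_fract c \<in> m"
  shows "W \<subseteq> localize (poly_part W) m"
proof
  have sW: "subring W" by (rule valuation_domainD(1)[OF W(1)])
  note unit_notin_m = inverse_notin_if_t_ideal_contains_const[OF W m c]
  have "m \<subseteq> W" using m(1) by (auto simp: t_ideal_def is_ideal_def poly_part_eq)
  then have "const_fract c \<in> W" "inverse (const_fract c) \<notin> W"
    using c unit_notin_m[of "const_fract c"] by auto
  then obtain r where "const_fract (of_rat r) \<in> W" "inverse (const_fract (of_rat r)) \<notin> W"
    using exists_rational_nonunit[OF K W(1)] by blast
  then have r: "const_fract r \<in> V" "inverse (const_fract r) \<notin> V"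
    using VW by (simp_all add: of_rat_fract_inverse)
  fix z assume z: "z \<in> W"
  obtain p q where "z = Fract p q" and q: "q \<noteq> 0" by (cases z) blast
  then have pq: "z = to_fract p / to_fract q" by (simp only: Fract_conv_to_fract)
  obtain u where u: "q * u \<noteq> 0" "to_fract (q * u) \<in> W" "inverse (to_fract (q * u)) \<in> W"
    using exists_poly_multiple_unit[OF K V VW r q] by blast
  have s: "to_fract (q * u) \<in> poly_part W"
    using u(2) rangeI[of to_fract "q * u"] unfolding poly_part_eq by blast
  have s_notin: "to_fract (q * u) \<notin> m" using u(1,3) unit_notin_m to_fract_eq_0_iff by metis
  have "to_fract (q * u) * z = to_fract (p * u)" using pq q by simp
  moreover have "to_fract (q * u) * z \<in> W" using subring_mult[OF sW u(2) z] .
  ultimately have "to_fract (q * u) * z \<in> poly_part W" unfolding poly_part_eq by (metis IntI rangeI)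
  moreover have "z = to_fract (q * u) * z / to_fract (q * u)" using u(1) by (simp del: to_fract_mult)
  ultimately show "z \<in> localize (poly_part W) m" using localize_memI s s_notin by metis
qed

lemma PvMD_poly_part:
  fixes W :: "'k::field_char_0 poly fract set" and V :: "rat poly fract set"
  assumes K: "finite_ext_Q TYPE('k)" and V: "DVR V" and VW: "\<And>x. x \<in> V \<longleftrightarrow> of_rat_fract x \<in> W"
    and W: "valuation_domain W" "to_fract [:0, 1:] \<in> W"
  shows "PvMD (poly_part W)"
  unfolding PvMD_def qf_poly_part[OF W]
proof (intro conjI allI impI)
  let ?B = "poly_part W"
  show B: "subring ?B" by (rule poly_part_subring[OF valuation_domainD(1)[OF W(1)]])
  fix m assume m: "t_maximal ?B m"
  have prime: "prime_ideal ?B m" by (rule t_maximal_prime_ideal[OF B qf_poly_part[OF W] m])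
  have "valuation_domain (localize ?B m)"
  proof (cases "range to_fract \<subseteq> localize ?B m")
    case True
    then show ?thesis by (rule valuation_domain_localize_if_polys[OF B prime])
  next
    case False
    then obtain p where "to_fract p \<notin> localize ?B m" by auto
    then obtain c where c: "c \<noteq> 0" "const_fract c \<in> m"
      using const_in_prime_ideal_if_poly_notin_localize[OF W prime] by blast
    have "W \<subseteq> localize ?B m"
      using m c by (intro valuation_domain_subset_localize[OF K V VW W]) (auto simp: t_maximal_def)
    then show ?thesis by (rule valuation_domain_overring[OF W(1) localize_subring[OF B prime]])
  qed
  then show "valuation_domain_in UNIV (localize ?B m)" by (simp add: valuation_domain_def)
qed

theorem mainTheorem12:
  fixes V :: "rat poly fract set" and W :: "'k::field_char_0 poly fract set"
  assumes "finite_ext_Q TYPE('k)"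
    and "DVR V"
    and "{Fract p 1 | p. \<forall>i. coeff p i \<in> \<int>} \<subseteq> V"
    and "PvMD (poly_part V)"
    and "valuation_domain W"
    and "\<forall>p q. q \<noteq> 0 \<longrightarrow>
           (Fract p q \<in> V \<longleftrightarrow> Fract (map_poly of_rat p) (map_poly of_rat q) \<in> W)"
  shows "PvMD (poly_part W)"
proof -
  have VW: "x \<in> V \<longleftrightarrow> of_rat_fract x \<in> W" for x
    by (cases x) (simp add: assms(6) of_rat_fract_Fract)
  have "\<forall>i. coeff [:0, 1 :: rat:] i \<in> \<int>" by (simp add: coeff_pCons split: nat.split)
  then have "to_fract [:0, 1 :: rat:] \<in> V" using assms(3) by (auto simp: to_fract_def)
  then have "to_fract [:0, 1:] \<in> W" using VW by (simp add: map_poly_pCons)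
  then show ?thesis using PvMD_poly_part[OF assms(1,2) VW assms(5)] by blast
qed

end
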